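(* Let $\lambda\in(0,1)$ and $\omega\in(0,1]$ be fixed with $\omega\le (1-\lambda)/\lambda$. The capacity of the symmetric network coding channel $\mathrm{SNC}(\lambda,\omega)$ is $$C(\lambda,\omega)=1-\lambda-\omega+\lambda\omega^2 .$$
   Context: Fix a prime power $q$ and the finite field $\mathbb{F}_q$. For an integer $N$ let $\ell=\lambda N$ and $m=N-\ell$ (considered along values of $N$ for which $\ell$ and $\ell\omega$ are integers). The symmetric network coding channel $\mathrm{SNC}(\lambda,\omega)$ has as input an $\ell\times m$ matrix $\underline{x}$ over $\mathbb{F}_q$ and as output $\underline{y}=\underline{x}+\underline{z}$, where $\underline{z}$ is chosen, independently of $\underline{x}$, uniformly at random among all $\ell\times m$ matrices over $\mathbb{F}_q$ of rank exactly $\ell\omega$. Its capacity is defined as $$C(\lambda,\omega)=\lim_{N\to\infty,\ \ell=\lambda N}\frac{1}{N\ell}\sup_{P_{\underline{X}}} I(\underline{X};\underline{Y}),$$ where the supremum is over input distributions, $I$ is mutual information measured in base-$q$ logarithms, and $\underline{Y}$ is the channel output for input $\underline{X}$. *)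

theory Defs
  imports "HOL-Analysis.Analysis" "Jordan_Normal_Form.DL_Rank"
begin

definition SNC_inputs :: "nat \<Rightarrow> nat \<Rightarrow> 'a::{finite,field} mat set" where
  "SNC_inputs l m = carrier_mat l m"

definition SNC_noise :: "nat \<Rightarrow> nat \<Rightarrow> nat \<Rightarrow> 'a::{finite,field} mat set" where
  "SNC_noise l m r = {Z \<in> carrier_mat l m. vec_space.rank l Z = r}"

text \<open>Transition probability W(y|x): Z uniform on the rank-r matrices, Y = X + Z.\<close>
definition SNC_W :: "nat \<Rightarrow> nat \<Rightarrow> nat \<Rightarrow> 'a::{finite,field} mat \<Rightarrow> 'a mat \<Rightarrow> real" where
  "SNC_W l m r x y =
     (if y - x \<in> SNC_noise l m r then 1 / real (card (SNC_noise l m r :: 'a mat set)) else 0)"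

definition SNC_input_dists :: "nat \<Rightarrow> nat \<Rightarrow> ('a::{finite,field} mat \<Rightarrow> real) set" where
  "SNC_input_dists l m = {P. (\<forall>x. P x \<ge> 0) \<and> (\<forall>x. x \<notin> SNC_inputs l m \<longrightarrow> P x = 0)
                             \<and> (\<Sum>x\<in>SNC_inputs l m. P x) = 1}"

definition SNC_out :: "nat \<Rightarrow> nat \<Rightarrow> nat \<Rightarrow> ('a::{finite,field} mat \<Rightarrow> real) \<Rightarrow> 'a mat \<Rightarrow> real" where
  "SNC_out l m r P y = (\<Sum>x\<in>SNC_inputs l m. P x * SNC_W l m r x y)"

definition SNC_MI :: "nat \<Rightarrow> nat \<Rightarrow> nat \<Rightarrow> ('a::{finite,field} mat \<Rightarrow> real) \<Rightarrow> real" where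
  "SNC_MI l m r P =
     (\<Sum>x\<in>SNC_inputs l m. \<Sum>y\<in>SNC_inputs l m.
        (if P x * SNC_W l m r x y = 0 then 0
         else P x * SNC_W l m r x y
              * log (real CARD('a)) (SNC_W l m r x y / SNC_out l m r P y)))"

definition SNC_lengths :: "real \<Rightarrow> real \<Rightarrow> nat set" where
  "SNC_lengths lam om = {N. \<exists>l k :: nat. real l = lam * real N \<and> real k = real l * om}"

text \<open>Normalized capacity at block length N: (1/(N l)) sup_P I(X;Y), with
  l = lambda N, m = N - l, r = l omega (exact integers for N in SNC_lengths).\<close>
definition SNC_cap_N :: "'a::{finite,field} itself \<Rightarrow> real \<Rightarrow> real \<Rightarrow> nat \<Rightarrow> real" where
  "SNC_cap_N _ lam om N =
     (let l = nat \<lfloor>lam * real N\<rfloor>; m = N - l; r = nat \<lfloor>real l * om\<rfloor> in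
      (1 / (real N * real l)) * (SUP P \<in> (SNC_input_dists l m :: ('a mat \<Rightarrow> real) set). SNC_MI l m r P))"

end

theory Submission
  imports Defs
begin

text \<open>The noise is uniform on the set of \<open>K\<close> matrices of rank \<open>r\<close> and independent of the input,
  so \<open>I(X;Y) = H(Y) - log\<^sub>q K\<close>, which the uniform input maximises: the block capacity is
  \<open>l m - log\<^sub>q K\<close>. A rank-\<open>r\<close> matrix is determined by \<open>r\<close> columns spanning its column space
  together with the coefficients expressing the other columns in them; counting these data
  gives \<open>log\<^sub>q K = r (l + m - r) + O(m)\<close>. With \<open>l = \<lambda>N\<close>, \<open>m = (1 - \<lambda>)N\<close> and \<open>r = \<lambda>\<omega>N\<close>,
  dividing by \<open>N l\<close> yields \<open>1 - \<lambda> - \<omega> + \<lambda>\<omega>\<^sup>2\<close> up to an error \<open>1/(\<lambda>N)\<close>.\<close>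

lemma card_field_ge_2: "CARD('a::{finite,field}) \<ge> 2"
proof -
  have "card {0::'a, 1} = 2" by simp
  moreover have "card {0::'a, 1} \<le> CARD('a)" by (rule card_mono) auto
  ultimately show ?thesis by simp
qed

lemma bij_betw_carrier_vec_PiE:
  "bij_betw (\<lambda>v. restrict (($) v) {..<n}) (carrier_vec n) ({..<n} \<rightarrow>\<^sub>E (UNIV :: 'a set))"
  by (rule bij_betwI[where g = "vec n"])
    (auto intro!: eq_vecI simp: fun_eq_iff PiE_def extensional_def)

lemma card_carrier_vec: "card (carrier_vec n :: 'a::finite vec set) = CARD('a) ^ n"
  using bij_betw_same_card[OF bij_betw_carrier_vec_PiE[of n]] by (simp add: card_PiE)

lemma finite_carrier_vec: "finite (carrier_vec n :: 'a::finite vec set)"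
  using bij_betw_finite[OF bij_betw_carrier_vec_PiE[of n]] by (auto intro!: finite_PiE)

lemma bij_betw_carrier_mat_PiE:
  "bij_betw (\<lambda>A. restrict (\<lambda>(i, j). A $$ (i, j)) ({..<l} \<times> {..<m})) (carrier_mat l m)
     ({..<l} \<times> {..<m} \<rightarrow>\<^sub>E (UNIV :: 'a set))"
  by (rule bij_betwI[where g = "mat l m"])
    (auto intro!: eq_matI simp: fun_eq_iff PiE_def extensional_def)

lemma card_carrier_mat: "card (carrier_mat l m :: 'a::finite mat set) = CARD('a) ^ (l * m)"
  using bij_betw_same_card[OF bij_betw_carrier_mat_PiE[of l m]] by (simp add: card_PiE)

lemma finite_carrier_mat: "finite (carrier_mat l m :: 'a::finite mat set)"
  using bij_betw_finite[OF bij_betw_carrier_mat_PiE[of l m]] by (auto intro!: finite_PiE)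

lemma card_translate_mat:
  fixes x :: "'a::ab_group_add mat"
  assumes "x \<in> carrier_mat l m" and "Z \<subseteq> carrier_mat l m"
  shows "card {y \<in> carrier_mat l m. y - x \<in> Z} = card Z"
proof -
  have "z + x - x = z" if "z \<in> carrier_mat l m" for z
    using that assms(1) by (intro eq_matI) auto
  then have "bij_betw (\<lambda>y. y - x) {y \<in> carrier_mat l m. y - x \<in> Z} Z"
    by (intro bij_betwI[where g = "\<lambda>z. z + x"]) (use assms in \<open>auto intro!: eq_matI\<close>)
  then show ?thesis by (rule bij_betw_same_card)
qed

lemma card_reflect_mat:
  fixes y :: "'a::ab_group_add mat"
  assumes "y \<in> carrier_mat l m" and "Z \<subseteq> carrier_mat l m"
  shows "card {x \<in> carrier_mat l m. y - x \<in> Z} = card Z"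
proof -
  have "y - (y - z) = z" "y - z \<in> carrier_mat l m" if "z \<in> carrier_mat l m" for z
    using that assms(1) by (auto intro!: eq_matI)
  then have "bij_betw (\<lambda>x. y - x) {x \<in> carrier_mat l m. y - x \<in> Z} Z"
    by (intro bij_betwI[where g = "\<lambda>z. y - z"]) (use assms in auto)
  then show ?thesis by (rule bij_betw_same_card)
qed

definition entropy :: "real \<Rightarrow> ('b \<Rightarrow> real) \<Rightarrow> 'b set \<Rightarrow> real" where
  "entropy b p A = (\<Sum>y\<in>A. if p y = 0 then 0 else - p y * log b (p y))"

lemma entropy_le_log_card:
  assumes fin: "finite A" and nonneg: "\<And>y. y \<in> A \<Longrightarrow> p y \<ge> 0" and sum1: "sum p A = 1"
    and b: "b > 1"
  shows "entropy b p A \<le> log b (card A)"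
proof -
  define n where "n = real (card A)"
  have "A \<noteq> {}" using sum1 by auto
  then have n: "n > 0" using fin by (simp add: n_def card_gt_0_iff)
  have lnb: "ln b > 0" using b by simp
  \<comment> \<open>Pointwise \<open>ln t \<le> t - 1\<close> at \<open>t = 1 / (n p y)\<close>.\<close>
  have pointwise: "(if p y = 0 then 0 else - p y * log b (p y)) \<le> p y * log b n + (1/n - p y) / ln b"
    if y: "y \<in> A" for y
  proof (cases "p y = 0")
    case True
    then show ?thesis using n lnb by simp
  next
    case False
    then have py: "p y > 0" using nonneg[OF y] by simp
    define t where "t = 1 / (n * p y)"
    have t: "t > 0" using py n by (simp add: t_def)
    have "p y * ln t \<le> p y * (t - 1)"
      using ln_le_minus_one[OF t] py by (simp add: mult_left_mono)
    also have "\<dots> = 1/n - p y" using py n by (simp add: t_def field_simps)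
    finally have "p y * ln t \<le> 1/n - p y" .
    moreover have "ln t = - ln n - ln (p y)" using py n by (simp add: t_def ln_div ln_mult)
    ultimately show ?thesis
      using False lnb by (simp add: log_def field_simps divide_right_mono)
  qed
  have "entropy b p A \<le> (\<Sum>y\<in>A. p y * log b n + (1/n - p y) / ln b)"
    unfolding entropy_def by (rule sum_mono) (rule pointwise)
  also have "\<dots> = log b n * sum p A + (card A * (1/n) - sum p A) / ln b"
    by (simp add: sum.distrib sum_distrib_right sum_divide_distrib[symmetric] sum_subtractf
        mult.commute)
  also have "\<dots> = log b n" using sum1 n by (simp add: n_def)
  finally show ?thesis by (simp add: n_def)
qed

lemma entropy_uniform:
  assumes "finite A" and "A \<noteq> {}" and "\<And>y. y \<in> A \<Longrightarrow> p y = 1 / card A"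
  shows "entropy b p A = log b (card A)"
proof -
  have "card A > 0" using assms(1,2) by (simp add: card_gt_0_iff)
  then have "entropy b p A = (\<Sum>y\<in>A. - (1 / card A) * log b (1 / card A))"
    unfolding entropy_def using assms(3) by (intro sum.cong) auto
  also have "\<dots> = log b (card A)" using \<open>card A > 0\<close> by (simp add: log_divide)
  finally show ?thesis .
qed

lemma SNC_noise_subset: "SNC_noise l m r \<subseteq> carrier_mat l m"
  unfolding SNC_noise_def by auto

lemma finite_SNC_noise: "finite (SNC_noise l m r :: 'a::{finite,field} mat set)"
  using finite_carrier_mat SNC_noise_subset by (rule finite_subset[rotated])

lemma SNC_W_nonneg: "SNC_W l m r x y \<ge> 0"
  by (simp add: SNC_W_def)

lemma sum_SNC_W:
  fixes x :: "'a::{finite,field} mat"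
  assumes "(SNC_noise l m r :: 'a mat set) \<noteq> {}" and "x \<in> carrier_mat l m"
  shows "(\<Sum>y\<in>carrier_mat l m. SNC_W l m r x y) = 1"
proof -
  have "(\<Sum>y\<in>carrier_mat l m. SNC_W l m r x y)
      = card {y \<in> carrier_mat l m. y - x \<in> SNC_noise l m r} / card (SNC_noise l m r :: 'a mat set)"
    unfolding SNC_W_def by (simp add: sum.inter_filter[symmetric] finite_carrier_mat)
  also have "\<dots> = 1"
    using assms card_translate_mat[OF assms(2) SNC_noise_subset]
    by (simp add: card_0_eq finite_SNC_noise)
  finally show ?thesis .
qed

lemma SNC_out_nonneg: "P \<in> SNC_input_dists l m \<Longrightarrow> SNC_out l m r P y \<ge> 0"
  unfolding SNC_out_def SNC_input_dists_def by (auto intro!: sum_nonneg simp: SNC_W_nonneg)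

lemma SNC_W_le_out:
  assumes "P \<in> SNC_input_dists l m" and "x \<in> carrier_mat l m"
  shows "P x * SNC_W l m r x y \<le> SNC_out l m r P y"
  unfolding SNC_out_def SNC_inputs_def using assms
  by (intro member_le_sum)
    (auto simp: SNC_input_dists_def finite_carrier_mat intro!: mult_nonneg_nonneg SNC_W_nonneg)

lemma sum_SNC_out:
  fixes P :: "'a::{finite,field} mat \<Rightarrow> real"
  assumes "(SNC_noise l m r :: 'a mat set) \<noteq> {}" and "P \<in> SNC_input_dists l m"
  shows "(\<Sum>y\<in>carrier_mat l m. SNC_out l m r P y) = 1"
proof -
  have "(\<Sum>y\<in>carrier_mat l m. SNC_out l m r P y)
      = (\<Sum>x\<in>carrier_mat l m. P x * (\<Sum>y\<in>carrier_mat l m. SNC_W l m r x y))"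
    unfolding SNC_out_def SNC_inputs_def by (subst sum.swap) (simp add: sum_distrib_left)
  also have "\<dots> = (\<Sum>x\<in>carrier_mat l m. P x)"
    by (intro sum.cong) (simp_all add: sum_SNC_W[OF assms(1)])
  also have "\<dots> = 1"
    using assms(2) by (simp add: SNC_input_dists_def SNC_inputs_def)
  finally show ?thesis .
qed

lemma SNC_MI_eq_entropy:
  fixes P :: "'a::{finite,field} mat \<Rightarrow> real"
  assumes noise: "(SNC_noise l m r :: 'a mat set) \<noteq> {}" and P: "P \<in> SNC_input_dists l m"
  shows "SNC_MI l m r P
       = entropy CARD('a) (SNC_out l m r P) (carrier_mat l m)
         - log CARD('a) (card (SNC_noise l m r :: 'a mat set))"
proof -
  define X where "X = (carrier_mat l m :: 'a mat set)"
  define K where "K = real (card (SNC_noise l m r :: 'a mat set))"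
  define q where "q = real CARD('a)"
  define W where "W = (SNC_W l m r :: 'a mat \<Rightarrow> 'a mat \<Rightarrow> real)"
  define out where "out = SNC_out l m r P"
  define H where "H y = (if out y = 0 then 0 else - log q (out y))" for y
  have K: "K > 0" using noise by (simp add: K_def card_gt_0_iff finite_SNC_noise)
  have Pnn: "P x \<ge> 0" for x using P by (simp add: SNC_input_dists_def)
  have P1: "sum P X = 1" using P by (simp add: SNC_input_dists_def SNC_inputs_def X_def)
  have out: "out y = (\<Sum>x\<in>X. P x * W x y)" for y
    by (simp add: out_def SNC_out_def SNC_inputs_def X_def W_def)
  have summand: "(if P x * W x y = 0 then 0 else P x * W x y * log q (W x y / out y))
      = P x * W x y * (- log q K + H y)" if x: "x \<in> X" for x y
  proof (cases "P x * W x y = 0")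
    case False
    then have W: "W x y = 1 / K" by (auto simp: W_def SNC_W_def K_def split: if_splits)
    have "0 < P x * W x y" using False Pnn[of x] SNC_W_nonneg[of l m r x y]
      by (simp add: W_def less_le)
    also have "P x * W x y \<le> out y"
      using SNC_W_le_out[OF P] x by (simp add: X_def W_def out_def)
    finally have "out y > 0" .
    have "q > 1" using card_field_ge_2[where 'a='a] by (simp add: q_def)
    with \<open>out y > 0\<close> K show ?thesis by (simp add: W H_def log_divide log_mult algebra_simps)
  qed simp
  have "SNC_MI l m r P = (\<Sum>x\<in>X. \<Sum>y\<in>X. P x * W x y * (- log q K + H y))"
    unfolding SNC_MI_def SNC_inputs_def X_def[symmetric] q_def[symmetric] W_def[symmetric]
      out_def[symmetric]
    by (intro sum.cong refl) (erule summand)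
  also have "\<dots> = (\<Sum>x\<in>X. \<Sum>y\<in>X. P x * W x y * (- log q K))
      + (\<Sum>y\<in>X. \<Sum>x\<in>X. P x * W x y * H y)"
    by (simp only: distrib_left sum.distrib sum.swap[of "\<lambda>x y. P x * W x y * H y"])
  also have "(\<Sum>x\<in>X. \<Sum>y\<in>X. P x * W x y * (- log q K))
      = - log q K * (\<Sum>x\<in>X. P x * (\<Sum>y\<in>X. W x y))"
    by (simp add: sum_distrib_left mult_ac)
  also have "(\<Sum>y\<in>X. \<Sum>x\<in>X. P x * W x y * H y) = (\<Sum>y\<in>X. out y * H y)"
    unfolding out by (simp add: sum_distrib_right)
  also have "(\<Sum>x\<in>X. P x * (\<Sum>y\<in>X. W x y)) = 1"
    using P1 sum_SNC_W[OF noise] by (simp add: X_def W_def)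
  also have "(\<Sum>y\<in>X. out y * H y) = entropy q out X"
    unfolding entropy_def H_def by (intro sum.cong) auto
  finally show ?thesis by (simp add: X_def K_def q_def out_def)
qed

lemma SNC_out_uniform:
  fixes y :: "'a::{finite,field} mat"
  assumes "(SNC_noise l m r :: 'a mat set) \<noteq> {}" and "y \<in> carrier_mat l m"
  defines "U \<equiv> \<lambda>x. if x \<in> carrier_mat l m then 1 / card (carrier_mat l m :: 'a mat set) else 0"
  shows "SNC_out l m r U y = 1 / card (carrier_mat l m :: 'a mat set)"
proof -
  define c where "c = 1 / (card (carrier_mat l m :: 'a mat set) * card (SNC_noise l m r :: 'a mat set))"
  have "SNC_out l m r U y = (\<Sum>x\<in>carrier_mat l m. if y - x \<in> SNC_noise l m r then c else 0)"
    unfolding SNC_out_def SNC_inputs_def SNC_W_def U_def c_def by (intro sum.cong) auto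
  also have "\<dots> = card {x \<in> carrier_mat l m. y - x \<in> SNC_noise l m r} * c"
    by (simp add: sum.inter_filter[symmetric] finite_carrier_mat)
  finally show ?thesis
    using assms card_reflect_mat[OF assms(2) SNC_noise_subset]
    by (simp add: c_def card_0_eq finite_SNC_noise)
qed

lemma SUP_SNC_MI:
  assumes noise: "(SNC_noise l m r :: 'a::{finite,field} mat set) \<noteq> {}"
  shows "(SUP P \<in> (SNC_input_dists l m :: ('a mat \<Rightarrow> real) set). SNC_MI l m r P)
       = real (l * m) - log CARD('a) (card (SNC_noise l m r :: 'a mat set))"
proof -
  define X where "X = (carrier_mat l m :: 'a mat set)"
  define q where "q = real CARD('a)"
  have q: "q > 1" using card_field_ge_2[where 'a='a] by (simp add: q_def)
  have X: "finite X" "X \<noteq> {}" by (auto simp: X_def finite_carrier_mat intro: zero_carrier_mat)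
  have log_card_X: "log q (card X) = real (l * m)"
    using q by (simp add: X_def q_def card_carrier_mat)
  have upper: "SNC_MI l m r P \<le> real (l * m) - log q (card (SNC_noise l m r :: 'a mat set))"
    if P: "P \<in> SNC_input_dists l m" for P :: "'a mat \<Rightarrow> real"
    using entropy_le_log_card[OF X(1) SNC_out_nonneg[OF P] sum_SNC_out[OF noise P, folded X_def] q]
    unfolding SNC_MI_eq_entropy[OF noise P] q_def[symmetric] X_def[symmetric] log_card_X by simp
  define U where
    "U = (\<lambda>x :: 'a mat. if x \<in> carrier_mat l m then 1 / card (carrier_mat l m :: 'a mat set) else 0)"
  have U: "U \<in> SNC_input_dists l m"
    using X by (simp add: SNC_input_dists_def SNC_inputs_def X_def[symmetric] U_def)
  have "entropy q (SNC_out l m r U) X = real (l * m)"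
    unfolding log_card_X[symmetric]
    by (rule entropy_uniform[OF X]) (use SNC_out_uniform[OF noise] in \<open>simp add: U_def X_def\<close>)
  then have MI_U: "SNC_MI l m r U = real (l * m) - log q (card (SNC_noise l m r :: 'a mat set))"
    unfolding SNC_MI_eq_entropy[OF noise U] q_def[symmetric] X_def[symmetric] by simp
  have max: "real (l * m) - log q (card (SNC_noise l m r :: 'a mat set))
      \<in> SNC_MI l m r ` (SNC_input_dists l m :: ('a mat \<Rightarrow> real) set)"
    by (intro image_eqI[where x = U] MI_U[symmetric] U)
  show ?thesis
    unfolding q_def[symmetric] by (rule cSup_eq_maximum[OF max]) (use upper in blast)
qed

text \<open>Every rank-\<open>r\<close> matrix has this form with \<open>card J = r\<close>, which gives the upper count;
  the lower count uses \<open>J = {..<r}\<close> with independent leading columns.\<close>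

definition col_extension ::
  "nat \<Rightarrow> nat \<Rightarrow> nat set \<Rightarrow> (nat \<times> nat \<Rightarrow> 'a::comm_ring) \<Rightarrow> (nat \<Rightarrow> nat \<Rightarrow> 'a) \<Rightarrow> 'a mat" where
  "col_extension n m J a c = mat n m (\<lambda>(i, j). if j \<in> J then a (i, j) else (\<Sum>k\<in>J. c j k * a (i, k)))"

locale finite_vec_space = vec_space f_ty n for f_ty :: "'a::{finite,field} itself" and n :: nat
begin

lemma span_eq_lincomb_image:
  assumes fin: "finite A" and A: "A \<subseteq> carrier_vec n"
  shows "span A = (\<lambda>a. lincomb a A) ` (A \<rightarrow>\<^sub>E UNIV)"
proof (intro equalityI subsetI)
  fix v assume "v \<in> span A"
  then obtain a where a: "lincomb a A = v"
    using finite_in_span[OF fin] A by fastforce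
  have "lincomb (restrict a A) A = lincomb a A"
    by (rule lincomb_restrict[OF A]) auto
  then show "v \<in> (\<lambda>a. lincomb a A) ` (A \<rightarrow>\<^sub>E UNIV)"
    using a by (intro image_eqI[where x = "restrict a A"]) auto
next
  fix v assume "v \<in> (\<lambda>a. lincomb a A) ` (A \<rightarrow>\<^sub>E UNIV)"
  then show "v \<in> span A" using finite_span[OF fin] A by auto
qed

lemma span_finite: "finite A \<Longrightarrow> A \<subseteq> carrier_vec n \<Longrightarrow> finite (span A)"
  by (simp add: span_eq_lincomb_image finite_PiE)

lemma card_span_le:
  assumes "finite A" and "A \<subseteq> carrier_vec n"
  shows "card (span A) \<le> CARD('a) ^ card A"
proof -
  have "card (span A) \<le> card (A \<rightarrow>\<^sub>E (UNIV :: 'a set))"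
    unfolding span_eq_lincomb_image[OF assms] using assms(1) by (intro card_image_le finite_PiE) auto
  then show ?thesis using assms(1) by (simp add: card_PiE)
qed

definition indep_lists :: "nat \<Rightarrow> 'a vec list set" where
  "indep_lists k = {xs. length xs = k \<and> set xs \<subseteq> carrier_vec n \<and> distinct xs \<and> lin_indpt (set xs)}"

lemma finite_indep_lists: "finite (indep_lists k)"
proof (rule finite_subset)
  show "indep_lists k \<subseteq> {xs. set xs \<subseteq> carrier_vec n \<and> length xs = k}"
    unfolding indep_lists_def by auto
  show "finite {xs. set xs \<subseteq> (carrier_vec n :: 'a vec set) \<and> length xs = k}"
    by (rule finite_lists_length_eq) (rule finite_carrier_vec)
qed

lemma indep_lists_0: "indep_lists 0 = {[]}"
  unfolding indep_lists_def lin_dep_def by auto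

lemma card_indep_lists_Suc_ge:
  "card (indep_lists k) * (CARD('a) ^ n - CARD('a) ^ k) \<le> card (indep_lists (Suc k))"
proof -
  define S where "S = Sigma (indep_lists k) (\<lambda>xs. carrier_vec n - span (set xs))"
  have "card (indep_lists k) * (CARD('a) ^ n - CARD('a) ^ k)
      = (\<Sum>xs\<in>indep_lists k. CARD('a) ^ n - CARD('a) ^ k)"
    by simp
  also have "\<dots> \<le> (\<Sum>xs\<in>indep_lists k. card (carrier_vec n - span (set xs)))"
  proof (rule sum_mono)
    fix xs assume xs: "xs \<in> indep_lists k"
    then have sv: "set xs \<subseteq> carrier_vec n" "card (set xs) = k"
      unfolding indep_lists_def by (auto simp: distinct_card)
    have "card (carrier_vec n - span (set xs)) = CARD('a) ^ n - card (span (set xs))"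
      using sv span_finite[OF _ sv(1)] span_is_subset2[OF sv(1)]
      by (simp add: card_Diff_subset card_carrier_vec)
    then show "CARD('a) ^ n - CARD('a) ^ k \<le> card (carrier_vec n - span (set xs))"
      using card_span_le[OF _ sv(1)] sv(2) by simp
  qed
  also have "\<dots> = card S"
    unfolding S_def by (rule card_SigmaI[symmetric]) (auto simp: finite_indep_lists finite_carrier_vec)
  also have "card S \<le> card (indep_lists (Suc k))"
  proof (rule card_inj_on_le[where f = "\<lambda>(xs, v). xs @ [v]"])
    show "inj_on (\<lambda>(xs, v). xs @ [v]) S" by (rule inj_onI) (auto simp: S_def indep_lists_def)
    show "(\<lambda>(xs, v). xs @ [v]) ` S \<subseteq> indep_lists (Suc k)"
    proof clarify
      fix xs v assume "(xs, v) \<in> S"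
      then have xs: "xs \<in> indep_lists k" and v: "v \<in> carrier_vec n" "v \<notin> span (set xs)"
        unfolding S_def by auto
      then have sv: "set xs \<subseteq> carrier_vec n" "lin_indpt (set xs)"
        unfolding indep_lists_def by auto
      have "v \<notin> set xs" using v(2) in_own_span[OF sv(1)] by auto
      moreover have "lin_indpt (set xs \<union> {v})"
        using lin_dep_iff_in_span[OF sv v(1) \<open>v \<notin> set xs\<close>] v(2) by simp
      ultimately show "xs @ [v] \<in> indep_lists (Suc k)"
        using xs v unfolding indep_lists_def by auto
    qed
  qed (rule finite_indep_lists)
  finally show ?thesis .
qed

text \<open>Each new vector may be anything outside a span of at most half of the space.\<close>

lemma card_indep_lists_ge:
  assumes "k \<le> n"
  shows "(real CARD('a) ^ n / 2) ^ k \<le> card (indep_lists k)"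
  using assms
proof (induction k)
  case 0
  then show ?case by (simp add: indep_lists_0)
next
  case (Suc k)
  define q where "q = CARD('a)"
  have q: "q \<ge> 2" unfolding q_def by (rule card_field_ge_2)
  have "2 * q ^ k \<le> q * q ^ (n - 1)"
    using q Suc.prems by (intro mult_mono power_increasing) auto
  also have "\<dots> = q ^ n" using Suc.prems by (cases n) auto
  finally have "2 * q ^ k \<le> q ^ n" .
  then have "real (2 * q ^ k) \<le> real (q ^ n)" by (rule of_nat_mono)
  then have "real q ^ n / 2 \<le> real (q ^ n - q ^ k)"
    using \<open>2 * q ^ k \<le> q ^ n\<close> by (simp add: of_nat_diff)
  then have "(real q ^ n / 2) ^ k * (real q ^ n / 2) \<le> card (indep_lists k) * real (q ^ n - q ^ k)"
    using Suc by (intro mult_mono) (auto simp: q_def)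
  then have "(real q ^ n / 2) ^ Suc k \<le> card (indep_lists k) * real (q ^ n - q ^ k)"
    by (simp add: mult.commute)
  also have "\<dots> \<le> card (indep_lists (Suc k))"
    using card_indep_lists_Suc_ge by (simp add: q_def flip: of_nat_mult)
  finally show ?case by (simp add: q_def)
qed

lemma exists_spanning_cols:
  assumes Z: "Z \<in> carrier_mat n m" and rk: "rank Z = r"
  shows "\<exists>J \<subseteq> {..<m}. card J = r \<and> inj_on (col Z) J \<and> (\<forall>j<m. col Z j \<in> span (col Z ` J))"
proof -
  have cols: "set (cols Z) = col Z ` {..<m}" "set (cols Z) \<subseteq> carrier_vec n"
    using Z cols_dim[of Z] by (auto simp: cols_def)
  obtain S where S: "maximal S (\<lambda>T. T \<subseteq> set (cols Z) \<and> lin_indpt T)"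
    using maximal_exists[of "\<lambda>T. T \<subseteq> set (cols Z) \<and> lin_indpt T" "card (set (cols Z))" "{}"]
    by (meson List.finite_set card_mono empty_iff empty_subsetI finite_lin_indpt2 rev_finite_subset)
  have S_cols: "S \<subseteq> set (cols Z)" "lin_indpt S" using S unfolding maximal_def by auto
  have S_carrier: "S \<subseteq> carrier_vec n" using S_cols cols by auto
  define g where "g = inv_into {..<m} (col Z)"
  have g: "g s < m \<and> col Z (g s) = s" if "s \<in> S" for s
    using that S_cols(1) cols(1) inv_into_into[of s "col Z" "{..<m}"] f_inv_into_f[of s "col Z"]
    by (auto simp: g_def)
  have inj_g: "inj_on g S" by (rule inj_onI) (metis g)
  show ?thesis
  proof (intro exI[where x = "g ` S"] conjI allI impI)
    show "g ` S \<subseteq> {..<m}" using g by auto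
    show "card (g ` S) = r" using rank_card_indpt[OF Z S] rk card_image[OF inj_g] by simp
    show "inj_on (col Z) (g ` S)" by (rule inj_onI) (auto simp: g)
    have col_g: "col Z ` g ` S = S" using g by (auto simp: image_iff)
    fix j assume j: "j < m"
    show "col Z j \<in> span (col Z ` g ` S)"
    proof (rule ccontr)
      assume not_span: "col Z j \<notin> span (col Z ` g ` S)"
      have "col Z j \<in> carrier_vec n" "col Z j \<notin> S"
        using j Z not_span in_own_span[OF S_carrier] by (auto simp: col_g)
      then have "lin_indpt (S \<union> {col Z j})"
        using lin_dep_iff_in_span[OF S_carrier S_cols(2)] not_span by (simp add: col_g)
      moreover have "S \<union> {col Z j} \<subseteq> set (cols Z)" using S_cols(1) cols(1) j by auto
      ultimately have "S \<union> {col Z j} = S" using S unfolding maximal_def by blast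
      then show False using \<open>col Z j \<notin> S\<close> by auto
    qed
  qed
qed

lemma rank_mat_eq_col_extension:
  assumes Z: "Z \<in> carrier_mat n m" and rk: "rank Z = r"
  shows "\<exists>J a c. J \<subseteq> {..<m} \<and> card J = r \<and> a \<in> {..<n} \<times> J \<rightarrow>\<^sub>E UNIV
    \<and> c \<in> {..<m} - J \<rightarrow>\<^sub>E J \<rightarrow>\<^sub>E UNIV \<and> Z = col_extension n m J a c"
proof -
  obtain J where J: "J \<subseteq> {..<m}" "card J = r" "inj_on (col Z) J"
    "\<And>j. j < m \<Longrightarrow> col Z j \<in> span (col Z ` J)"
    using exists_spanning_cols[OF assms] by blast
  have fin_J: "finite J" using J(1) finite_subset by blast
  have J_carrier: "col Z ` J \<subseteq> carrier_vec n" using J(1) Z by auto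
  have "\<forall>j\<in>{..<m}. \<exists>f. lincomb f (col Z ` J) = col Z j"
    using finite_in_span[OF finite_imageI[OF fin_J] J_carrier J(4)] by blast
  then obtain f where f: "\<forall>j\<in>{..<m}. lincomb (f j) (col Z ` J) = col Z j"
    by (auto dest: bchoice)
  define a where "a = restrict (\<lambda>(i, j). Z $$ (i, j)) ({..<n} \<times> J)"
  define c where "c = restrict (\<lambda>j. restrict (\<lambda>k. f j (col Z k)) J) ({..<m} - J)"
  have eq: "Z = col_extension n m J a c"
  proof (rule eq_matI)
    fix i j assume "i < dim_row (col_extension n m J a c)" "j < dim_col (col_extension n m J a c)"
    then have ij: "i < n" "j < m" by (auto simp: col_extension_def)
    show "Z $$ (i, j) = col_extension n m J a c $$ (i, j)"
    proof (cases "j \<in> J")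
      case False
      have "Z $$ (i, j) = lincomb (f j) (col Z ` J) $ i" using f ij Z by simp
      also have "\<dots> = (\<Sum>k\<in>J. f j (col Z k) * col Z k $ i)"
        using lincomb_index[OF ij(1) J_carrier] by (simp add: sum.reindex[OF J(3)])
      also have "\<dots> = (\<Sum>k\<in>J. c j k * a (i, k))"
        using J(1) ij Z False by (intro sum.cong) (auto simp: c_def a_def)
      finally show ?thesis using False ij by (simp add: col_extension_def)
    qed (use ij in \<open>simp add: col_extension_def a_def\<close>)
  qed (use Z in \<open>auto simp: col_extension_def\<close>)
  have "a \<in> {..<n} \<times> J \<rightarrow>\<^sub>E UNIV" "c \<in> {..<m} - J \<rightarrow>\<^sub>E J \<rightarrow>\<^sub>E UNIV"
    by (auto simp: a_def c_def)
  then show ?thesis using J(1,2) eq by blast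
qed

lemma card_rank_mat_le:
  "card {Z \<in> carrier_mat n m. rank Z = r} \<le> 2 ^ m * (CARD('a) ^ (n * r) * (CARD('a) ^ r) ^ (m - r))"
proof -
  define Js where "Js = {J. J \<subseteq> {..<m} \<and> card J = r}"
  define D where
    "D J = ({..<n} \<times> J \<rightarrow>\<^sub>E (UNIV :: 'a set)) \<times> ({..<m} - J \<rightarrow>\<^sub>E J \<rightarrow>\<^sub>E (UNIV :: 'a set))" for J
  define size where "size = CARD('a) ^ (n * r) * (CARD('a) ^ r) ^ (m - r)"
  have fin_Js: "finite Js" unfolding Js_def by (rule finite_subset[of _ "Pow {..<m}"]) auto
  have card_Js: "card Js \<le> 2 ^ m"
    using card_mono[of "Pow {..<m}" Js] by (auto simp: Js_def card_Pow)
  have D: "finite (D J)" "card (D J) = size" if "J \<in> Js" for J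
  proof -
    have J: "J \<subseteq> {..<m}" "card J = r" "finite J"
      using that unfolding Js_def by (auto intro: finite_subset)
    then have "card ({..<m} - J) = m - r" by (simp add: card_Diff_subset)
    with J show "card (D J) = size"
      by (simp add: D_def size_def card_cartesian_product card_PiE)
    show "finite (D J)"
      unfolding D_def using J by (intro finite_cartesian_product finite_PiE) auto
  qed
  have "{Z \<in> carrier_mat n m. rank Z = r} \<subseteq> (\<Union>J\<in>Js. (\<lambda>(a, c). col_extension n m J a c) ` D J)"
  proof (rule subsetI)
    fix Z assume "Z \<in> {Z \<in> carrier_mat n m. rank Z = r}"
    then have "Z \<in> carrier_mat n m" "rank Z = r" by auto
    then obtain J a c where "J \<subseteq> {..<m}" "card J = r" "a \<in> {..<n} \<times> J \<rightarrow>\<^sub>E UNIV"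
      "c \<in> {..<m} - J \<rightarrow>\<^sub>E J \<rightarrow>\<^sub>E UNIV" "Z = col_extension n m J a c"
      using rank_mat_eq_col_extension by blast
    then show "Z \<in> (\<Union>J\<in>Js. (\<lambda>(a, c). col_extension n m J a c) ` D J)"
      unfolding Js_def D_def by (intro UN_I[where a = J] rev_image_eqI[where x = "(a, c)"]) simp_all
  qed
  then have "card {Z \<in> carrier_mat n m. rank Z = r}
      \<le> card (\<Union>J\<in>Js. (\<lambda>(a, c). col_extension n m J a c) ` D J)"
    by (intro card_mono) (auto simp: fin_Js D)
  also have "\<dots> \<le> (\<Sum>J\<in>Js. card ((\<lambda>(a, c). col_extension n m J a c) ` D J))"
    by (rule card_UN_le[OF fin_Js])
  also have "\<dots> \<le> (\<Sum>J\<in>Js. size)"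
  proof (rule sum_mono)
    fix J assume "J \<in> Js"
    then show "card ((\<lambda>(a, c). col_extension n m J a c) ` D J) \<le> size"
      using card_image_le[OF D(1)] D(2) by simp
  qed
  also have "\<dots> \<le> 2 ^ m * size" using card_Js by simp
  finally show ?thesis unfolding size_def .
qed

lemma lin_indpt_lincomb_coeff_eq:
  assumes "lin_indpt A" "finite A" "A \<subseteq> carrier_vec n"
    and eq: "lincomb f A = lincomb g A" and v: "v \<in> A"
  shows "f v = g v"
proof -
  have "lincomb (\<lambda>v. f v - g v) A = 0\<^sub>v n"
  proof (rule eq_vecI)
    fix i assume "i < dim_vec (0\<^sub>v n :: 'a vec)"
    then have i: "i < n" by simp
    have "lincomb f A $ i = lincomb g A $ i" using eq by simp
    then show "lincomb (\<lambda>v. f v - g v) A $ i = 0\<^sub>v n $ i"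
      using i by (simp add: lincomb_index[OF i assms(3)] algebra_simps sum_subtractf)
  qed (use assms(3) in \<open>simp add: lincomb_closed[OF assms(3)]\<close>)
  then have "(\<lambda>v. f v - g v) \<in> A \<rightarrow> {zero class_ring}"
    using not_lindepD[OF assms(1,2) subset_refl] by auto
  then show ?thesis using v by auto
qed

definition list_coeffs :: "'a vec list \<Rightarrow> (nat \<Rightarrow> 'a) \<Rightarrow> 'a vec \<Rightarrow> 'a" where
  "list_coeffs xs d = (\<lambda>v. d (the_inv_into {..<length xs} ((!) xs) v))"

lemma list_coeffs_nth: "distinct xs \<Longrightarrow> k < length xs \<Longrightarrow> list_coeffs xs d (xs ! k) = d k"
  unfolding list_coeffs_def by (simp add: the_inv_into_f_f inj_on_nth)

lemma lincomb_set_list_index: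
  assumes "set xs \<subseteq> carrier_vec n" "distinct xs" "i < n"
  shows "lincomb f (set xs) $ i = (\<Sum>k<length xs. f (xs ! k) * xs ! k $ i)"
proof -
  have "set xs = (!) xs ` {..<length xs}" by (auto simp: in_set_conv_nth)
  moreover have "inj_on ((!) xs) {..<length xs}" using assms(2) by (intro inj_on_nth) auto
  ultimately show ?thesis using lincomb_index[OF assms(3,1)] by (simp add: sum.reindex)
qed

definition list_extension :: "nat \<Rightarrow> 'a vec list \<Rightarrow> (nat \<Rightarrow> nat \<Rightarrow> 'a) \<Rightarrow> 'a mat" where
  "list_extension m xs c = col_extension n m {..<length xs} (\<lambda>(i, k). xs ! k $ i) c"

lemma
  assumes xs: "xs \<in> indep_lists r" and "r \<le> m"
  shows col_list_extension_lt: "j < r \<Longrightarrow> col (list_extension m xs c) j = xs ! j"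
    and col_list_extension_ge:
      "r \<le> j \<Longrightarrow> j < m \<Longrightarrow>
        col (list_extension m xs c) j = lincomb (list_coeffs xs (c j)) (set xs)"
proof -
  have xs': "length xs = r" "set xs \<subseteq> carrier_vec n" "distinct xs"
    using xs by (auto simp: indep_lists_def)
  show "col (list_extension m xs c) j = xs ! j" if "j < r"
  proof -
    have "xs ! j \<in> carrier_vec n" using that xs' nth_mem by blast
    then show ?thesis
      using that assms xs' by (intro eq_vecI) (auto simp: list_extension_def col_extension_def)
  qed
  show "col (list_extension m xs c) j = lincomb (list_coeffs xs (c j)) (set xs)"
    if "r \<le> j" "j < m"
  proof -
    have "lincomb (list_coeffs xs (c j)) (set xs) \<in> carrier_vec n"
      using xs'(2) by (intro lincomb_closed) auto
    then have dim: "dim_vec (lincomb (list_coeffs xs (c j)) (set xs)) = n" by simp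
    show ?thesis
    proof (rule eq_vecI)
      fix i assume "i < dim_vec (lincomb (list_coeffs xs (c j)) (set xs))"
      then show "col (list_extension m xs c) j $ i = lincomb (list_coeffs xs (c j)) (set xs) $ i"
        using that xs' dim
        by (simp add: list_extension_def col_extension_def lincomb_set_list_index list_coeffs_nth)
    qed (use that in \<open>simp add: dim list_extension_def col_extension_def\<close>)
  qed
qed

lemma rank_list_extension:
  assumes xs: "xs \<in> indep_lists r" and rm: "r \<le> m"
  shows "rank (list_extension m xs c) = r"
proof -
  define Z where "Z = list_extension m xs c"
  have xs': "length xs = r" "set xs \<subseteq> carrier_vec n" "distinct xs" "lin_indpt (set xs)"
    using xs by (auto simp: indep_lists_def)
  have Z: "Z \<in> carrier_mat n m" by (simp add: Z_def list_extension_def col_extension_def)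
  have cols: "set (cols Z) = col Z ` {..<m}" "set (cols Z) \<subseteq> carrier_vec n"
    using Z cols_dim[of Z] by (auto simp: cols_def)
  have xs_cols: "set xs \<subseteq> set (cols Z)"
  proof
    fix v assume "v \<in> set xs"
    then obtain k where k: "k < r" "v = xs ! k" using xs'(1) by (auto simp: in_set_conv_nth)
    then have "v = col Z k" using col_list_extension_lt[OF xs rm] by (simp add: Z_def)
    then show "v \<in> set (cols Z)" using cols(1) k(1) rm by simp
  qed
  have cols_span: "v \<in> span (set xs)" if v: "v \<in> set (cols Z)" for v
  proof -
    obtain j where j: "j < m" "v = col Z j" using v cols(1) by auto
    show ?thesis
    proof (cases "j < r")
      case True
      then show ?thesis
        using j xs' in_own_span[OF xs'(2)] col_list_extension_lt[OF xs rm] unfolding Z_def by auto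
    next
      case False
      then show ?thesis
        using j finite_span[OF _ xs'(2)] col_list_extension_ge[OF xs rm] unfolding Z_def by auto
    qed
  qed
  have "maximal (set xs) (\<lambda>T. T \<subseteq> set (cols Z) \<and> lin_indpt T)"
    unfolding maximal_def
  proof (intro conjI allI impI xs_cols xs'(4))
    fix T assume T: "set xs \<subseteq> T \<and> T \<subseteq> set (cols Z) \<and> lin_indpt T"
    show "T = set xs"
    proof (rule ccontr)
      assume "T \<noteq> set xs"
      then obtain t where t: "t \<in> T" "t \<notin> set xs" using T by auto
      then have "t \<in> carrier_vec n" "t \<in> span (set xs)" using T cols(2) cols_span by auto
      then have "lin_dep (set xs \<union> {t})"
        using lin_dep_iff_in_span[OF xs'(2,4) _ t(2)] by simp
      then have "lin_dep T" by (rule supset_ld_is_ld) (use T t in auto)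
      then show False using T by simp
    qed
  qed
  then show ?thesis
    using rank_card_indpt[OF Z] distinct_card[OF xs'(3)] xs'(1) by (simp add: Z_def)
qed

lemma list_extension_inject:
  assumes xs: "xs \<in> indep_lists r" and ys: "ys \<in> indep_lists r" and rm: "r \<le> m"
    and c: "c \<in> {r..<m} \<rightarrow>\<^sub>E {..<r} \<rightarrow>\<^sub>E UNIV" and d: "d \<in> {r..<m} \<rightarrow>\<^sub>E {..<r} \<rightarrow>\<^sub>E UNIV"
    and eq: "list_extension m xs c = list_extension m ys d"
  shows "xs = ys \<and> c = d"
proof
  have xs': "length xs = r" "set xs \<subseteq> carrier_vec n" "distinct xs" "lin_indpt (set xs)"
    and "length ys = r" using xs ys by (auto simp: indep_lists_def)
  have "xs ! k = ys ! k" if "k < r" for k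
    using col_list_extension_lt[OF xs rm that, of c] col_list_extension_lt[OF ys rm that, of d]
      eq by simp
  then show "xs = ys" using xs'(1) \<open>length ys = r\<close> by (simp add: list_eq_iff_nth_eq)
  have cd: "c j k = d j k" if j: "j \<in> {r..<m}" and k: "k < r" for j k
  proof -
    have "lincomb (list_coeffs xs (c j)) (set xs) = lincomb (list_coeffs xs (d j)) (set xs)"
      using col_list_extension_ge[OF xs rm, of j c] col_list_extension_ge[OF ys rm, of j d]
        eq j \<open>xs = ys\<close> by simp
    then have "list_coeffs xs (c j) (xs ! k) = list_coeffs xs (d j) (xs ! k)"
      using k xs' by (intro lin_indpt_lincomb_coeff_eq) auto
    then show ?thesis using k xs' by (simp add: list_coeffs_nth)
  qed
  show "c = d"
  proof (rule PiE_ext[OF c d])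
    fix j assume j: "j \<in> {r..<m}"
    then have "c j \<in> {..<r} \<rightarrow>\<^sub>E UNIV" "d j \<in> {..<r} \<rightarrow>\<^sub>E UNIV" using c d by auto
    then show "c j = d j" by (rule PiE_ext) (simp add: cd[OF j])
  qed
qed

lemma card_rank_mat_ge:
  assumes "r \<le> m"
  shows "card (indep_lists r) * (CARD('a) ^ r) ^ (m - r) \<le> card {Z \<in> carrier_mat n m. rank Z = r}"
proof -
  define D where "D = indep_lists r \<times> ({r..<m} \<rightarrow>\<^sub>E {..<r} \<rightarrow>\<^sub>E (UNIV :: 'a set))"
  define R where "R = {Z \<in> carrier_mat n m. rank Z = r}"
  have "finite R" unfolding R_def by (rule finite_subset[OF _ finite_carrier_mat]) auto
  moreover have "(\<lambda>(xs, c). list_extension m xs c) ` D \<subseteq> R"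
    using rank_list_extension[OF _ assms]
    by (auto simp: D_def R_def list_extension_def col_extension_def)
  moreover have "inj_on (\<lambda>(xs, c). list_extension m xs c) D"
    using list_extension_inject[OF _ _ assms] by (intro inj_onI) (auto simp: D_def)
  ultimately have "card D \<le> card R" by (intro card_inj_on_le)
  then show ?thesis by (simp add: D_def R_def card_cartesian_product card_PiE)
qed

end

lemma card_SNC_noise_bounds:
  fixes l m r :: nat
  assumes rl: "r \<le> l" and rm: "r \<le> m"
  shows "real CARD('a) ^ (r * (l + m - r)) / 2 ^ r \<le> card (SNC_noise l m r :: 'a::{finite,field} mat set)"
    and "card (SNC_noise l m r :: 'a mat set) \<le> 2 ^ m * real CARD('a) ^ (r * (l + m - r))"
proof -
  interpret finite_vec_space "TYPE('a)" l .
  define q where "q = CARD('a)"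
  have noise: "SNC_noise l m r = {Z \<in> carrier_mat l m. rank Z = r}"
    by (simp add: SNC_noise_def)
  have E: "q ^ (l * r) * (q ^ r) ^ (m - r) = q ^ (r * (l + m - r))"
  proof -
    have "l * r + r * (m - r) = r * (l + m - r)" using rm by (simp add: algebra_simps diff_mult_distrib2)
    then show ?thesis by (simp flip: power_mult power_add)
  qed
  have "(real q ^ l / 2) ^ r * (real q ^ r) ^ (m - r) \<le> card (indep_lists r) * (real q ^ r) ^ (m - r)"
    using card_indep_lists_ge[OF rl] by (intro mult_right_mono) (auto simp: q_def)
  also have "\<dots> \<le> card (SNC_noise l m r :: 'a mat set)"
    using card_rank_mat_ge[OF rm] unfolding noise q_def by (simp flip: of_nat_power of_nat_mult)
  finally show "real CARD('a) ^ (r * (l + m - r)) / 2 ^ r \<le> card (SNC_noise l m r :: 'a mat set)"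
    using arg_cong[OF E, of real]
    by (simp add: q_def power_divide power_mult_distrib flip: power_mult)
  have "card (SNC_noise l m r :: 'a mat set) \<le> 2 ^ m * q ^ (r * (l + m - r))"
    using card_rank_mat_le[of m r, folded q_def, unfolded E] by (simp add: noise)
  then have "real (card (SNC_noise l m r :: 'a mat set)) \<le> real (2 ^ m * q ^ (r * (l + m - r)))"
    by (rule of_nat_mono)
  then show "card (SNC_noise l m r :: 'a mat set) \<le> 2 ^ m * real CARD('a) ^ (r * (l + m - r))"
    by (simp add: q_def)
qed

lemma log_card_SNC_noise_approx:
  fixes l m r :: nat
  assumes "r \<le> l" and "r \<le> m"
  shows "(SNC_noise l m r :: 'a::{finite,field} mat set) \<noteq> {}"
    and "\<bar>log CARD('a) (card (SNC_noise l m r :: 'a mat set)) - real (r * (l + m - r))\<bar> \<le> m"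
proof -
  define q where "q = real CARD('a)"
  define K where "K = real (card (SNC_noise l m r :: 'a mat set))"
  define E where "E = r * (l + m - r)"
  have q: "q \<ge> 2" using card_field_ge_2[where 'a='a] by (simp add: q_def)
  have lower: "q ^ E / 2 ^ r \<le> K" and upper: "K \<le> 2 ^ m * q ^ E"
    using card_SNC_noise_bounds[OF assms, where 'a='a] by (simp_all add: q_def K_def E_def)
  have "0 < q ^ E / 2 ^ r" using q by simp
  then have K: "K > 0" using lower by linarith
  then show "(SNC_noise l m r :: 'a mat set) \<noteq> {}" by (auto simp: K_def)
  have log2: "0 \<le> log q 2" "log q 2 \<le> 1" using q by simp_all
  have "log q K \<le> log q (2 ^ m * q ^ E)" using K upper q by simp
  also have "\<dots> = m * log q 2 + E" using q by (simp add: log_mult log_nat_power)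
  finally have "log q K \<le> E + m" using log2 mult_left_le[of "log q 2" "real m"] by linarith
  moreover have "log q (q ^ E / 2 ^ r) \<le> log q K"
    using q \<open>0 < q ^ E / 2 ^ r\<close> lower by (intro log_mono) simp_all
  then have "E - r * log q 2 \<le> log q K" using q by (simp add: log_divide log_nat_power)
  then have "real E - real m \<le> log q K"
    using log2 mult_left_le[of "log q 2" "real r"] assms(2) by linarith
  ultimately show "\<bar>log CARD('a) (card (SNC_noise l m r :: 'a mat set)) - real (r * (l + m - r))\<bar> \<le> m"
    by (simp add: q_def K_def E_def abs_le_iff)
qed

lemma SNC_cap_N_approx:
  fixes lam om :: real
  assumes lam: "0 < lam" "lam < 1" and om: "0 < om" "om \<le> 1" "om \<le> (1 - lam) / lam"
    and N: "N \<in> SNC_lengths lam om" "N \<ge> 1"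
  shows "\<bar>SNC_cap_N TYPE('a::{finite,field}) lam om N - (1 - lam - om + lam * om ^ 2)\<bar>
    \<le> 1 / (lam * N)"
proof -
  obtain l r :: nat where l: "real l = lam * N" and r: "real r = l * om"
    using N(1) unfolding SNC_lengths_def by blast
  define m where "m = N - l"
  have "real l \<le> N" using l lam by (simp add: mult_left_le_one_le)
  then have m: "real m = real N - real l" by (simp add: m_def of_nat_diff)
  have N_pos: "real N > 0" and l_pos: "real l > 0" using N(2) l lam by auto
  have "real r \<le> l" using r om l_pos by (simp add: mult_left_le)
  then have rl: "r \<le> l" by simp
  have "om * lam \<le> 1 - lam" using om lam by (simp add: le_divide_eq)
  then have "om * lam * N \<le> (1 - lam) * N" using N_pos by (intro mult_right_mono) auto
  then have rm: "r \<le> m" using l r m by (simp add: algebra_simps flip: of_nat_le_iff)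
  note K = log_card_SNC_noise_approx[OF rl rm, where 'a='a]
  have floor_l: "nat \<lfloor>lam * N\<rfloor> = l" and floor_r: "nat \<lfloor>l * om\<rfloor> = r"
    by (simp_all flip: l r)
  have "SNC_cap_N TYPE('a) lam om N
      = (l * m - log CARD('a) (card (SNC_noise l m r :: 'a mat set))) / (N * l)"
    unfolding SNC_cap_N_def Let_def floor_l floor_r m_def[symmetric] SUP_SNC_MI[OF K(1)]
    by simp
  moreover have "real (l * m) - real (r * (l + m - r)) = N * l * (1 - lam - om + lam * om ^ 2)"
  proof -
    have "real (r * (l + m - r)) = r * (l + m - real r)" using rm by (simp add: of_nat_diff)
    then show ?thesis by (simp add: m l r algebra_simps power2_eq_square)
  qed
  ultimately have "SNC_cap_N TYPE('a) lam om N - (1 - lam - om + lam * om ^ 2)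
      = (real (r * (l + m - r)) - log CARD('a) (card (SNC_noise l m r :: 'a mat set))) / (N * l)"
    using N_pos l_pos by (simp add: field_simps)
  also have "\<bar>\<dots>\<bar> \<le> m / (N * l)"
    using K(2) N_pos l_pos by (simp add: abs_divide abs_minus_commute divide_right_mono)
  also have "\<dots> \<le> 1 / (lam * N)"
    using m l N_pos l_pos by (simp add: field_simps)
  finally show ?thesis .
qed

theorem proposition1:
  fixes lam om :: real
  assumes "0 < lam" "lam < 1" "0 < om" "om \<le> 1" "om \<le> (1 - lam) / lam"
    and "lam \<in> \<rat>" "om \<in> \<rat>"
  shows "((\<lambda>N. SNC_cap_N TYPE('a::{finite,field}) lam om N)
           \<longlongrightarrow> 1 - lam - om + lam * om ^ 2) (inf at_top (principal (SNC_lengths lam om)))"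
proof (rule LIM_zero_cancel, rule Lim_null_comparison)
  let ?F = "inf at_top (principal (SNC_lengths lam om))"
  show "\<forall>\<^sub>F N in ?F. norm (SNC_cap_N TYPE('a) lam om N - (1 - lam - om + lam * om ^ 2))
      \<le> 1 / lam * (1 / real N)"
    unfolding eventually_inf_principal using eventually_ge_at_top[of 1]
    by eventually_elim (use SNC_cap_N_approx[OF assms(1-5), where 'a='a] in simp)
  have "((\<lambda>N. 1 / lam * (1 / real N)) \<longlongrightarrow> 0) at_top"
    by (intro tendsto_mult_right_zero lim_1_over_n)
  then show "((\<lambda>N. 1 / lam * (1 / real N)) \<longlongrightarrow> 0) ?F"
    by (rule filterlim_mono) (auto intro: inf_le1)
qed

end
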